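(* For every positive integer $n$ there exists an $n$-uniform hypergraph $G=(V,E)$ with $|V|=n^2$ vertices and $|E|=n^2$ edges with the following property: for every set $F\subseteq V$ with $|F|\le n^2/100$ there exists a set $H\subseteq V$ such that $|H|\le 100\,n\log n$, $H\cap F=\emptyset$, and $H$ intersects all but at most $n$ of the edges in $E$.
   Context: A hypergraph is $n$-uniform if every edge has exactly $n$ vertices. $\log$ denotes the natural logarithm. The stated property is called the "everywhere almost-hittable" (EAH) property. *)

theory Defs
  imports Complex_Main
begin

definition uniform_hypergraph :: "nat \<Rightarrow> 'a set \<Rightarrow> 'a set set \<Rightarrow> bool" where
  "uniform_hypergraph n V E \<longleftrightarrow> finite V \<and> (\<forall>e\<in>E. e \<subseteq> V \<and> card e = n)"

end

theory Submission
  imports Defs "HOL-Computational_Algebra.Primes" "HOL-Analysis.Harmonic_Numbers"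
begin

text \<open>
  The vertices are the cells of an \<open>n \<times> n\<close> grid and the edges are the graphs of \<open>n\<^sup>2\<close>
  functions \<open>{..<n} \<Rightarrow> {..<n}\<close>, any two of which agree in at most 63 places. Such functions
  come from the lines over \<open>\<int>/p\<close> for a prime \<open>p \<in> (4n, 32n]\<close>, with the residues grouped into
  buckets of about \<open>p/n\<close> consecutive values; the prime exists by Erdos' proof of Bertrand's
  postulate.

  Given \<open>F\<close>, call an edge heavy if more than 9/10 of it lies in \<open>F\<close>. Double counting and
  Cauchy-Schwarz (Corradi's inequality) show that there are at most \<open>n/18\<close> heavy edges. Every
  other edge leaves \<open>F\<close> in at least \<open>n/10\<close> columns, so \<open>t = \<lceil>20 ln n\<rceil>\<close> greedily chosen
  columns miss at most \<open>(9/10)\<^sup>t n\<^sup>2 \<le> 1\<close> of them, and \<open>H\<close> consists of the cells of these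
  columns outside \<open>F\<close>. For \<open>n < 100\<close> we have \<open>|F| < n\<close>, so \<open>H = V - F\<close> works for any
  \<open>n\<close>-uniform hypergraph.
\<close>

section \<open>A weak Bertrand postulate\<close>

lemma prod_primes_dvd:
  fixes m :: nat
  assumes "finite P" "\<And>p. p \<in> P \<Longrightarrow> prime p \<and> p dvd m"
  shows "\<Prod>P dvd m"
  using assms
proof (induction P rule: finite_induct)
  case (insert p P)
  have "coprime p (\<Prod>P)"
    using insert by (intro prod_coprime_right) (metis insert_iff primes_coprime)
  then show ?case using insert by (simp add: divides_mult)
qed simp

lemma binomial_odd_le_4_power: "(2 * k + 1) choose k \<le> 4 ^ k"
proof -
  have "(2 * k + 1) choose k \<le> (\<Sum>j\<le>k. 2 * k + 1 choose j)"
    by (rule member_le_sum) auto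
  also have "\<dots> = 2 ^ (2 * k)" by (rule binomial_r_part_sum)
  also have "\<dots> = 4 ^ k" by (simp add: power_mult)
  finally show ?thesis .
qed

lemma prod_primes_between_dvd_binomial:
  "\<Prod>{p. prime p \<and> k + 1 < p \<and> p \<le> 2 * k + 1} dvd ((2 * k + 1) choose k)"
proof (rule prod_primes_dvd)
  show "finite {p. prime p \<and> k + 1 < p \<and> p \<le> 2 * k + 1}" by simp
next
  fix p assume "p \<in> {p. prime p \<and> k + 1 < p \<and> p \<le> 2 * k + 1}"
  then have p: "prime p" "k + 1 < p" "p \<le> 2 * k + 1" by auto
  have "fact k * fact (k + 1) * ((2 * k + 1) choose k) = (fact (2 * k + 1) :: nat)"
    using binomial_fact_lemma[of k "2 * k + 1"] by simp
  moreover have "\<not> p dvd fact k" "\<not> p dvd fact (k + 1)"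
    using p by (simp_all only: prime_dvd_fact_iff[OF p(1)])
  moreover have "p dvd fact (2 * k + 1)"
    using p by (simp only: prime_dvd_fact_iff[OF p(1)])
  ultimately have "p dvd (2 * k + 1) choose k"
    using p(1) by (metis prime_dvd_mult_iff)
  then show "prime p \<and> p dvd (2 * k + 1) choose k" using p(1) by simp
qed

lemma primorial_le_4_power: "\<Prod>{p::nat. prime p \<and> p \<le> N} \<le> 4 ^ N"
proof (induction N rule: less_induct)
  case (less N)
  show ?case
  proof (cases "N \<le> 2")
    case True
    then consider "N < 2" | "N = 2" by linarith
    then show ?thesis
    proof cases
      case 1
      then have "{p::nat. prime p \<and> p \<le> N} = {}" by (auto dest: prime_gt_1_nat)
      then show ?thesis by (simp only: prod.empty) simp
    next
      case 2
      then have "{p::nat. prime p \<and> p \<le> N} = {2}" by (auto intro!: antisym simp: prime_ge_2_nat)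
      then show ?thesis using 2 by simp
    qed
  next
    case False
    show ?thesis
    proof (cases "even N")
      case True
      have "\<not> prime N" using False True prime_odd_nat by auto
      then have "{p::nat. prime p \<and> p \<le> N} = {p. prime p \<and> p \<le> N - 1}"
        by (auto simp: le_eq_less_or_eq)
      then have "\<Prod>{p::nat. prime p \<and> p \<le> N} \<le> 4 ^ (N - 1)"
        using less[of "N - 1"] False by simp
      also have "\<dots> \<le> 4 ^ N" by simp
      finally show ?thesis .
    next
      case odd: False
      define k where "k = N div 2"
      have N: "N = 2 * k + 1" "k + 1 < N" using odd False unfolding k_def by presburger+
      have split: "{p. prime p \<and> p \<le> N} =
          {p. prime p \<and> p \<le> k + 1} \<union> {p. prime p \<and> k + 1 < p \<and> p \<le> 2 * k + 1}"
        using N by auto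
      have "\<Prod>{p. prime p \<and> k + 1 < p \<and> p \<le> 2 * k + 1} \<le> (2 * k + 1) choose k"
        by (rule dvd_imp_le[OF prod_primes_between_dvd_binomial]) simp
      also have "\<dots> \<le> 4 ^ k" by (rule binomial_odd_le_4_power)
      finally have "\<Prod>{p. prime p \<and> p \<le> N} \<le> 4 ^ (k + 1) * 4 ^ k"
        unfolding split using less[of "k + 1"] N
        by (subst prod.union_disjoint) (auto intro: mult_le_mono)
      also have "\<dots> = 4 ^ N" using N by (simp flip: power_add)
      finally show ?thesis .
    qed
  qed
qed

lemma multiplicity_fact:
  fixes p :: nat
  assumes p: "prime p" and "n \<le> K"
  shows "multiplicity p (fact n) = (\<Sum>i\<in>{1..K}. n div p ^ i)"
  using \<open>n \<le> K\<close>
proof (induction n)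
  case (Suc n)
  let ?m = "multiplicity p (Suc n)"
  have "p ^ ?m \<le> Suc n" by (rule dvd_imp_le[OF multiplicity_dvd]) simp
  moreover have "?m < p ^ ?m"
    using less_exp[of ?m] power_mono[of 2 p ?m] prime_ge_2_nat[OF p] by linarith
  ultimately have "?m \<le> K" using Suc.prems by linarith
  have "p ^ i dvd Suc n \<longleftrightarrow> i \<le> ?m" for i
    by (rule power_dvd_iff_le_multiplicity) (use prime_gt_1_nat[OF p] in auto)
  then have "{i\<in>{1..K}. p ^ i dvd Suc n} = {i\<in>{1..K}. i \<le> ?m}" by simp
  also have "\<dots> = {1..?m}" using \<open>?m \<le> K\<close> by auto
  finally have m: "?m = (\<Sum>i\<in>{1..K}. if p ^ i dvd Suc n then 1 else 0)"
    by (simp flip: sum.inter_filter)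
  have "multiplicity p (fact (Suc n) :: nat) = multiplicity p (Suc n * fact n)"
    by (simp del: of_nat_Suc)
  also have "\<dots> = ?m + multiplicity p (fact n :: nat)"
    by (rule prime_elem_multiplicity_mult_distrib) (use p in auto)
  also have "\<dots> = (\<Sum>i\<in>{1..K}. (if p ^ i dvd Suc n then 1 else 0) + n div p ^ i)"
    using Suc m by (simp add: sum.distrib)
  also have "\<dots> = (\<Sum>i\<in>{1..K}. Suc n div p ^ i)"
    by (intro sum.cong) (auto simp: div_Suc mod_eq_0_iff_dvd)
  finally show ?case .
qed simp

lemma div_double_bounds:
  fixes m d :: nat
  assumes "0 < d"
  shows "2 * (m div d) \<le> 2 * m div d" and "2 * m div d \<le> 2 * (m div d) + 1"
proof -
  have "2 * m = 2 * (m div d * d + m mod d)" by simp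
  also have "\<dots> = 2 * (m mod d) + 2 * (m div d) * d" by (simp only: distrib_left mult.assoc add.commute)
  finally have "2 * m = 2 * (m mod d) + 2 * (m div d) * d" .
  then have eq: "2 * m div d = 2 * (m mod d) div d + 2 * (m div d)"
    using assms by simp
  have "2 * (m mod d) < 2 * d" using assms by simp
  then have "2 * (m mod d) div d < 2" by (rule less_mult_imp_div_less)
  then show "2 * (m div d) \<le> 2 * m div d" and "2 * m div d \<le> 2 * (m div d) + 1"
    unfolding eq by simp_all
qed

lemma multiplicity_central_binomial:
  fixes p :: nat
  assumes p: "prime p"
  shows "multiplicity p ((2 * M) choose M) = (\<Sum>i\<in>{1..2 * M}. 2 * M div p ^ i - 2 * (M div p ^ i))"
proof -
  have "fact M * fact M * ((2 * M) choose M) = (fact (2 * M) :: nat)"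
    using binomial_fact_lemma[of M "2 * M"] by simp
  then have fact_2M: "multiplicity p (fact (2 * M) :: nat)
      = 2 * multiplicity p (fact M :: nat) + multiplicity p ((2 * M) choose M)"
    using p by (simp add: prime_elem_multiplicity_mult_distrib flip: \<open>_ = fact (2 * M)\<close>)
  have "2 * (M div p ^ i) \<le> 2 * M div p ^ i" for i
    by (rule div_double_bounds) (use prime_gt_0_nat[OF p] in simp)
  then have "(\<Sum>i\<in>{1..2 * M}. 2 * M div p ^ i - 2 * (M div p ^ i))
      = (\<Sum>i\<in>{1..2 * M}. 2 * M div p ^ i) - (\<Sum>i\<in>{1..2 * M}. 2 * (M div p ^ i))"
    by (intro sum_subtractf_nat) auto
  also have "\<dots> = multiplicity p (fact (2 * M) :: nat) - 2 * multiplicity p (fact M :: nat)"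
    using multiplicity_fact[OF p, of M "2 * M"] multiplicity_fact[OF p, of "2 * M" "2 * M"]
    by (simp add: sum_distrib_left)
  finally show ?thesis using fact_2M by simp
qed

lemma prime_power_multiplicity_central_binomial_le:
  fixes p :: nat
  assumes p: "prime p" and "1 \<le> M"
  shows "p ^ multiplicity p ((2 * M) choose M) \<le> 2 * M"
proof (rule ccontr)
  define v where "v = multiplicity p ((2 * M) choose M)"
  define T where "T i = 2 * M div p ^ i - 2 * (M div p ^ i)" for i
  assume "\<not> p ^ multiplicity p ((2 * M) choose M) \<le> 2 * M"
  then have big: "2 * M < p ^ v" unfolding v_def by simp
  then have "v \<noteq> 0" using \<open>1 \<le> M\<close> by (cases v) auto
  have "T i \<le> 1" for i
    unfolding T_def using div_double_bounds(2)[of "p ^ i" M] prime_gt_0_nat[OF p] by simp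
  have "T i = 0" if "\<not> i < v" for i
  proof -
    have "p ^ v \<le> p ^ i" using that prime_gt_0_nat[OF p] by (simp add: power_increasing)
    then show ?thesis using big unfolding T_def by simp
  qed
  have "v = (\<Sum>i\<in>{1..2 * M}. T i)"
    unfolding v_def T_def by (rule multiplicity_central_binomial[OF p])
  also have "\<dots> = (\<Sum>i\<in>{1..2 * M} \<inter> {1..<v}. T i)"
    using \<open>\<And>i. \<not> i < v \<Longrightarrow> T i = 0\<close>
    by (intro sum.mono_neutral_right) auto
  also have "\<dots> \<le> card ({1..2 * M} \<inter> {1..<v})"
    using sum_bounded_above[of "{1..2 * M} \<inter> {1..<v}" T 1] \<open>\<And>i. T i \<le> 1\<close> by simp
  also have "\<dots> \<le> v - 1"
    using card_mono[of "{1..<v}" "{1..2 * M} \<inter> {1..<v}"] by simp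
  finally have "v \<le> v - 1" .
  then show False using \<open>v \<noteq> 0\<close> by simp
qed

lemma card_squares_le_floor_sqrt: "card {k::nat. 0 < k \<and> k * k \<le> m} \<le> nat \<lfloor>sqrt (real m)\<rfloor>"
proof -
  have "{k::nat. 0 < k \<and> k * k \<le> m} \<subseteq> {1..nat \<lfloor>sqrt (real m)\<rfloor>}"
  proof
    fix k assume "k \<in> {k::nat. 0 < k \<and> k * k \<le> m}"
    then have "0 < k" "real k ^ 2 \<le> real m" by (auto simp: power2_eq_square simp flip: of_nat_mult)
    then show "k \<in> {1..nat \<lfloor>sqrt (real m)\<rfloor>}" by (auto simp: le_nat_floor real_le_rsqrt)
  qed
  then show ?thesis using card_mono[of "{1..nat \<lfloor>sqrt (real m)\<rfloor>}"] by fastforce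
qed

lemma prod_le_prod_superset:
  fixes f :: "'a \<Rightarrow> 'b::linordered_semidom"
  assumes "finite B" "A \<subseteq> B" "\<And>b. b \<in> B - A \<Longrightarrow> 1 \<le> f b" "\<And>a. a \<in> A \<Longrightarrow> 0 \<le> f a"
  shows "prod f A \<le> prod f B"
proof -
  have "1 \<le> prod f (B - A)" using assms(3) by (rule prod_ge_1)
  moreover have "0 \<le> prod f A" using assms(4) by (rule prod_nonneg)
  ultimately have "prod f A \<le> prod f (B - A) * prod f A"
    using mult_right_mono by fastforce
  also have "\<dots> = prod f B" using assms(1,2) by (simp flip: prod.subset_diff)
  finally show ?thesis .
qed

lemma multiplicity_central_binomial_le_1:
  fixes p :: nat
  assumes p: "prime p" and "1 \<le> M" "2 * M < p * p"
  shows "multiplicity p ((2 * M) choose M) \<le> 1"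
proof -
  have "p ^ multiplicity p ((2 * M) choose M) < p ^ 2"
    using prime_power_multiplicity_central_binomial_le[OF assms(1,2)] assms(3)
    by (simp add: power2_eq_square)
  then show ?thesis using prime_gt_1_nat[OF p] by simp
qed

lemma central_binomial_le_if_prime_factors_le:
  assumes "1 \<le> M" and small: "\<And>p. prime p \<Longrightarrow> p dvd (2 * M) choose M \<Longrightarrow> p \<le> N"
  shows "(2 * M) choose M \<le> (2 * M) ^ nat \<lfloor>sqrt (real (2 * M))\<rfloor> * 4 ^ N"
proof -
  define C where "C = (2 * M) choose M"
  define P where "P = {p. prime p \<and> p \<le> N}"
  define S where "S = {p. p * p \<le> 2 * M}"
  define f where "f p = (if p \<in> S then 2 * M else p)" for p
  have "C > 0" unfolding C_def by simp
  have "finite P" unfolding P_def by simp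
  have "prime_factors C \<subseteq> P"
    using small \<open>C > 0\<close> unfolding C_def P_def by (auto simp: in_prime_factors_iff)
  have factor_le: "p ^ multiplicity p C \<le> f p" if "p \<in> prime_factors C" for p
  proof (cases "p \<in> S")
    case True
    have "prime p" using that by (simp add: in_prime_factors_iff)
    then show ?thesis unfolding C_def f_def
      using True prime_power_multiplicity_central_binomial_le[OF _ \<open>1 \<le> M\<close>] by simp
  next
    case False
    have p: "prime p" using that by (simp add: in_prime_factors_iff)
    then have "multiplicity p C \<le> 1"
      using False multiplicity_central_binomial_le_1[OF p \<open>1 \<le> M\<close>] unfolding C_def S_def by simp
    then have "p ^ multiplicity p C \<le> p ^ 1" using prime_gt_1_nat[OF p] by (intro power_increasing) auto
    then show ?thesis using False unfolding f_def by simp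
  qed
  have "C = (\<Prod>p\<in>prime_factors C. p ^ multiplicity p C)"
    using prod_prime_factors[of C] \<open>C > 0\<close> by simp
  also have "\<dots> \<le> (\<Prod>p\<in>prime_factors C. f p)"
    by (rule prod_mono) (use factor_le in simp)
  also have "\<dots> \<le> (\<Prod>p\<in>P. f p)"
    by (rule prod_le_prod_superset[OF \<open>finite P\<close> \<open>prime_factors C \<subseteq> P\<close>])
      (use \<open>1 \<le> M\<close> in \<open>auto simp: f_def P_def Suc_le_eq dest: prime_gt_0_nat\<close>)
  also have "\<dots> = (\<Prod>p\<in>P \<inter> S. f p) * (\<Prod>p\<in>P - S. f p)"
    using \<open>finite P\<close> by (rule prod.Int_Diff)
  also have "(\<Prod>p\<in>P \<inter> S. f p) = (2 * M) ^ card (P \<inter> S)"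
    by (simp add: f_def)
  also have "\<dots> \<le> (2 * M) ^ nat \<lfloor>sqrt (real (2 * M))\<rfloor>"
  proof (rule power_increasing)
    have "P \<inter> S \<subseteq> {k. 0 < k \<and> k * k \<le> 2 * M}"
      unfolding P_def S_def using prime_gt_0_nat by auto
    then have "card (P \<inter> S) \<le> card {k. 0 < k \<and> k * k \<le> 2 * M}"
      by (rule card_mono[rotated]) (auto intro: finite_subset[of _ "{..2 * M}"] dest: le_square[THEN le_trans])
    then show "card (P \<inter> S) \<le> nat \<lfloor>sqrt (real (2 * M))\<rfloor>"
      using card_squares_le_floor_sqrt[of "2 * M"] by linarith
  qed (use \<open>1 \<le> M\<close> in simp)
  also have "(\<Prod>p\<in>P - S. f p) = (\<Prod>p\<in>P - S. p)"
    by (rule prod.cong) (auto simp: f_def)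
  also have "\<dots> \<le> \<Prod>P"
    using \<open>finite P\<close> by (intro prod_le_prod_superset) (auto simp: P_def dest: prime_gt_0_nat)
  also have "\<dots> \<le> 4 ^ N" unfolding P_def by (rule primorial_le_4_power)
  finally show ?thesis unfolding C_def by simp
qed

lemma sqrt_plus_1_mult_ln_less:
  fixes x :: real
  assumes "3200 \<le> x"
  shows "(sqrt x + 1) * ln x < 3 / 8 * x * ln 4"
proof -
  define y where "y = sqrt x"
  have "56 \<le> y" unfolding y_def by (rule real_le_rsqrt) (use assms in simp)
  have x: "x = y\<^sup>2" unfolding y_def using assms by simp
  have ln_x: "ln x = 2 * ln y" unfolding x using \<open>56 \<le> y\<close> by (simp add: ln_realpow)
  have ln_4: "ln 4 = 2 * ln (2::real)" using ln_realpow[of 2 2] by simp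
  have "ln (2::real) \<le> 1" using ln_le_minus_one[of 2] by simp
  moreover have "ln (y / 16) \<le> y / 16 - 1" by (rule ln_le_minus_one) (use \<open>56 \<le> y\<close> in simp)
  moreover have "ln (16::real) = 4 * ln 2" using ln_realpow[of 2 4] by simp
  ultimately have ln_y: "ln y \<le> y / 16 + 3" using \<open>56 \<le> y\<close> by (simp add: ln_div)
  have "(sqrt x + 1) * ln x = (y + 1) * (2 * ln y)" unfolding y_def ln_x by simp
  also have "\<dots> \<le> (y + 1) * (2 * (y / 16 + 3))"
    using ln_y \<open>56 \<le> y\<close> by (intro mult_left_mono) auto
  also have "\<dots> = y * y / 8 + 49 / 8 * y + 6" by (simp add: field_simps)
  also have "\<dots> < 3 / 8 * y\<^sup>2"
    using mult_right_mono[OF \<open>56 \<le> y\<close>, of y] \<open>56 \<le> y\<close> unfolding power2_eq_square by linarith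
  also have "\<dots> \<le> 3 / 8 * x * ln 4"
  proof -
    have "y * y * 1 \<le> y * y * (2 * ln 2)" using ln2_ge_two_thirds by (intro mult_left_mono) auto
    then show ?thesis unfolding x ln_4 by (simp add: power2_eq_square)
  qed
  finally show ?thesis .
qed

text \<open>Erdos' argument: otherwise every prime factor of \<open>(8N choose 4N)\<close> is at most \<open>N\<close>, and
  then \<open>(8N choose 4N)\<close> is too small.\<close>

lemma exists_prime_between_N_8N:
  fixes N :: nat
  assumes "400 \<le> N"
  shows "\<exists>p. prime p \<and> N < p \<and> p \<le> 8 * N"
proof (rule ccontr)
  assume no_prime: "\<not> ?thesis"
  define M where "M = 4 * N"
  define r where "r = nat \<lfloor>sqrt (real (2 * M))\<rfloor>"
  have "0 < M" unfolding M_def using assms by simp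
  have "p \<le> N" if "prime p" "p dvd (2 * M) choose M" for p
  proof -
    have "(2 * M) choose M dvd fact (2 * M)"
      using binomial_fact_lemma[of M "2 * M"] by (metis dvd_triv_right le_add2 mult_2)
    then have "p \<le> 2 * M" using that dvd_trans prime_dvd_fact_iff by blast
    then show ?thesis using no_prime that(1) unfolding M_def by (cases "N < p") auto
  qed
  then have "(2 * M) choose M \<le> (2 * M) ^ r * 4 ^ N"
    unfolding r_def using \<open>0 < M\<close> by (intro central_binomial_le_if_prime_factors_le) auto
  then have "real ((2 * M) choose M) \<le> real ((2 * M) ^ r * 4 ^ N)"
    by (simp only: of_nat_le_iff)
  then have upper: "real ((2 * M) choose M) \<le> real (2 * M) ^ r * 4 ^ N"
    by simp
  have "4 ^ M / (2 * real M) \<le> real ((2 * M) choose M)"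
    by (rule central_binomial_lower_bound[OF \<open>0 < M\<close>])
  then have "(4::real) ^ M \<le> real (2 * M) * real ((2 * M) choose M)"
    using \<open>0 < M\<close> by (simp add: field_simps)
  also have "\<dots> \<le> real (2 * M) ^ (r + 1) * 4 ^ N"
    using upper by (simp add: mult_left_mono)
  finally have "(4::real) ^ (3 * N) * 4 ^ N \<le> real (2 * M) ^ (r + 1) * 4 ^ N"
    unfolding M_def by (simp flip: power_add)
  then have "ln ((4::real) ^ (3 * N)) \<le> ln (real (2 * M) ^ (r + 1))"
    using \<open>0 < M\<close> by simp
  then have "real (3 * N) * ln 4 \<le> real (r + 1) * ln (real (2 * M))"
    by (simp only: ln_realpow)
  also have "\<dots> \<le> (sqrt (real (2 * M)) + 1) * ln (real (2 * M))"
    unfolding r_def using \<open>0 < M\<close> by (intro mult_right_mono) auto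
  also have "\<dots> < 3 / 8 * real (2 * M) * ln 4"
    by (rule sqrt_plus_1_mult_ln_less) (use assms in \<open>simp add: M_def\<close>)
  finally show False unfolding M_def by simp
qed

section \<open>Functions with few pairwise agreements\<close>

text \<open>The intercept is a multiple of \<open>s\<close>, so parallel lines never share a bucket, while two
  non-parallel lines meet only once modulo \<open>p\<close> and therefore share a bucket in fewer than
  \<open>2s\<close> points.\<close>

fun bucketed_line :: "nat \<Rightarrow> nat \<Rightarrow> nat \<times> nat \<Rightarrow> nat \<Rightarrow> nat" where
  "bucketed_line p s (b, c) x = ((c * s + b * x) mod p) div s"

lemma div_eq_imp_abs_diff_less:
  fixes a b s :: nat
  assumes "a div s = b div s" "0 < s"
  shows "\<bar>int a - int b\<bar> < int s"
proof -
  have "int a = int (a div s * s) + int (a mod s)"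
    by (simp only: of_nat_add[symmetric] div_mult_mod_eq)
  moreover have "int b = int (a div s * s) + int (b mod s)"
    unfolding assms(1) by (simp only: of_nat_add[symmetric] div_mult_mod_eq)
  moreover have "int (a mod s) < int s" "int (b mod s) < int s" using assms(2) by simp_all
  ultimately show ?thesis by linarith
qed

lemma int_dvd_mod_diff:
  fixes p m :: nat
  shows "int p dvd int (m mod p) - int m"
  using mod_eq_dvd_iff[of "int (m mod p)" "int p" "int m"] by (simp add: zmod_int)

lemma dvd_abs_less_imp_zero:
  fixes d m :: int
  assumes "m dvd d" "\<bar>d\<bar> < \<bar>m\<bar>"
  shows "d = 0"
  using dvd_imp_le_int[OF _ assms(1)] assms(2) by fastforce

lemma bucketed_line_same_slope_neq:
  assumes "0 < s" "q * s \<le> p" "c < q" "c' < q" "c \<noteq> c'"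
  shows "bucketed_line p s (b, c) x \<noteq> bucketed_line p s (b, c') x"
proof
  assume agree: "bucketed_line p s (b, c) x = bucketed_line p s (b, c') x"
  define D where "D = int ((c * s + b * x) mod p) - int ((c' * s + b * x) mod p)"
  define d where "d = (int c - int c') * int s"
  have "\<bar>D\<bar> < int s"
    using agree div_eq_imp_abs_diff_less[OF _ \<open>0 < s\<close>] unfolding D_def by simp
  have "int p dvd D - d"
    using dvd_diff[OF int_dvd_mod_diff[of p "c * s + b * x"] int_dvd_mod_diff[of p "c' * s + b * x"]]
    unfolding D_def d_def by (simp add: algebra_simps)
  have "1 \<le> \<bar>int c - int c'\<bar>" "\<bar>int c - int c'\<bar> \<le> int q - 1"
    using assms(3-5) by auto
  then have "1 * int s \<le> \<bar>int c - int c'\<bar> * int s" "\<bar>int c - int c'\<bar> * int s \<le> (int q - 1) * int s"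
    by (simp_all only: mult_right_mono of_nat_0_le_iff)
  moreover have "int q * int s \<le> int p" using \<open>q * s \<le> p\<close> by (simp flip: of_nat_mult)
  moreover have "\<bar>d\<bar> = \<bar>int c - int c'\<bar> * int s" unfolding d_def by (simp add: abs_mult)
  moreover have "(int q - 1) * int s = int q * int s - int s" by (simp add: algebra_simps)
  ultimately have "int s \<le> \<bar>d\<bar>" "\<bar>D - d\<bar> < \<bar>int p\<bar>" using \<open>\<bar>D\<bar> < int s\<close> by linarith+
  then show False
    using dvd_abs_less_imp_zero[OF \<open>int p dvd D - d\<close>] \<open>\<bar>D\<bar> < int s\<close> by simp
qed

lemma card_bucketed_line_agree_le:
  assumes p: "prime p" and "0 < s" "q * s \<le> p" "n \<le> p"
    and "b < p" "c < q" "b' < p" "c' < q" and "(b, c) \<noteq> (b', c')"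
  shows "card {x\<in>{..<n}. bucketed_line p s (b, c) x = bucketed_line p s (b', c') x} \<le> 2 * s - 1"
proof (cases "b = b'")
  case True
  then have "{x\<in>{..<n}. bucketed_line p s (b, c) x = bucketed_line p s (b', c') x} = {}"
    using bucketed_line_same_slope_neq[OF assms(2,3,6,8)] \<open>(b, c) \<noteq> (b', c')\<close> by auto
  then show ?thesis by (simp only: card.empty)
next
  case False
  define A where "A = {x\<in>{..<n}. bucketed_line p s (b, c) x = bucketed_line p s (b', c') x}"
  define D where "D x = int ((c * s + b * x) mod p) - int ((c' * s + b' * x) mod p)" for x
  have close: "\<bar>D x\<bar> < int s" if "x \<in> A" for x
    using that div_eq_imp_abs_diff_less[OF _ \<open>0 < s\<close>] unfolding A_def D_def by auto
  have cong: "int p dvd D x - ((int c - int c') * int s + (int b - int b') * int x)" for x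
    using dvd_diff[OF int_dvd_mod_diff[of p "c * s + b * x"] int_dvd_mod_diff[of p "c' * s + b' * x"]]
    unfolding D_def by (simp add: algebra_simps)
  have "\<bar>int b - int b'\<bar> < int p" using \<open>b < p\<close> \<open>b' < p\<close> by arith
  then have "\<not> int p dvd int b - int b'"
    using dvd_abs_less_imp_zero[of "int p" "int b - int b'"] False by auto
  have "inj_on D A"
  proof (rule inj_onI)
    fix x y assume "x \<in> A" "y \<in> A" "D x = D y"
    have "int p dvd (int b - int b') * (int x - int y)"
      using dvd_diff[OF cong[of y] cong[of x]] \<open>D x = D y\<close> by (simp add: algebra_simps)
    then have "int p dvd int x - int y"
      using \<open>\<not> int p dvd int b - int b'\<close> p by (simp add: prime_dvd_mult_iff prime_nat_int_transfer)
    moreover have "\<bar>int x - int y\<bar> < \<bar>int p\<bar>" using \<open>x \<in> A\<close> \<open>y \<in> A\<close> \<open>n \<le> p\<close> unfolding A_def by auto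
    ultimately show "x = y" using dvd_abs_less_imp_zero[of "int p" "int x - int y"] by simp
  qed
  moreover have "D ` A \<subseteq> {-(int s - 1)..int s - 1}" using close by fastforce
  ultimately have "card A \<le> card {-(int s - 1)..int s - 1}"
    by (intro card_inj_on_le) auto
  also have "\<dots> = 2 * s - 1" using \<open>0 < s\<close> by simp
  finally show ?thesis unfolding A_def .
qed

lemma square_le_mult_of_bucket_bounds:
  fixes n p q s :: nat
  assumes "2 \<le> n" "4 * n < p" "s * n \<le> p + n" "p < (q + 1) * s"
  shows "n\<^sup>2 \<le> p * q"
proof -
  have "p * n < (q + 1) * s * n" using assms(1,4) by (intro mult_strict_right_mono) auto
  also have "\<dots> = (q + 1) * (s * n)" by (simp only: mult.assoc)
  also have "\<dots> \<le> (q + 1) * (p + n)" using assms(3) by (intro mult_left_mono) auto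
  finally have "4 * (p * n) < 4 * ((q + 1) * (p + n))" by simp
  also have "\<dots> = (q + 1) * (4 * (p + n))" by (simp only: mult.left_commute)
  also have "\<dots> \<le> (q + 1) * (5 * p)" using assms(2) by (intro mult_left_mono) auto
  finally have "p * (4 * n) < p * (5 * (q + 1))" by (simp add: algebra_simps)
  then have "4 * n < 5 * q + 5" by simp
  then have "5 * n \<le> 20 * q" using assms(1) by linarith
  then have "4 * n * (5 * n) \<le> p * (20 * q)"
    using assms(2) mult_le_mono[of "4 * n" p "5 * n" "20 * q"] by linarith
  then show ?thesis by (simp add: power2_eq_square algebra_simps)
qed

lemma obtain_functions_pairwise_few_agreements:
  fixes n :: nat
  assumes "100 \<le> n"
  obtains I :: "(nat \<times> nat) set" and g where "finite I" "card I = n\<^sup>2"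
    "\<And>i x. i \<in> I \<Longrightarrow> x < n \<Longrightarrow> g i x < n"
    "\<And>i j. i \<in> I \<Longrightarrow> j \<in> I \<Longrightarrow> i \<noteq> j \<Longrightarrow> card {x\<in>{..<n}. g i x = g j x} \<le> 63"
proof -
  obtain p where p: "prime p" "4 * n < p" "p \<le> 32 * n"
    using exists_prime_between_N_8N[of "4 * n"] assms by auto
  define s where "s = (p + n - 1) div n"
  define q where "q = p div s"
  have "0 < n" using assms by simp
  have "s * n \<le> p + n - 1" unfolding s_def by (rule div_times_less_eq_dividend)
  moreover have "p + n - 1 < (s + 1) * n"
    using \<open>0 < n\<close> unfolding s_def by (simp add: dividend_less_div_times)
  ultimately have "p \<le> s * n" by (simp add: algebra_simps)
  then have "0 < s" using p(2) by (cases s) auto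
  have "s * n < 33 * n" using \<open>s * n \<le> p + n - 1\<close> p(3) \<open>0 < n\<close> by linarith
  then have "s \<le> 32" by simp
  have "q * s \<le> p" unfolding q_def by (rule div_times_less_eq_dividend)
  have "p < (q + 1) * s" using \<open>0 < s\<close> unfolding q_def by (simp add: dividend_less_div_times)
  have "n\<^sup>2 \<le> p * q"
    using \<open>s * n \<le> p + n - 1\<close> \<open>p < (q + 1) * s\<close> assms p(2)
    by (intro square_le_mult_of_bucket_bounds) auto
  then have "n\<^sup>2 \<le> card ({..<p} \<times> {..<q})" by (simp add: card_cartesian_product)
  then obtain I where I: "I \<subseteq> {..<p} \<times> {..<q}" "card I = n\<^sup>2" "finite I"
    by (rule obtain_subset_with_card_n)
  show thesis
  proof (rule that[OF I(3,2)])
    fix i x assume "i \<in> I" "x < n"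
    have "(snd i * s + fst i * x) mod p < p" using p(2) by simp
    then have "(snd i * s + fst i * x) mod p < s * n" using \<open>p \<le> s * n\<close> by linarith
    then show "bucketed_line p s i x < n"
      using \<open>0 < s\<close> by (cases i) (simp add: div_less_iff_less_mult mult.commute)
  next
    fix i j assume ij: "i \<in> I" "j \<in> I" "i \<noteq> j"
    obtain b c b' c' where bc: "i = (b, c)" "j = (b', c')" by fastforce
    have "card {x\<in>{..<n}. bucketed_line p s (b, c) x = bucketed_line p s (b', c') x} \<le> 2 * s - 1"
      by (rule card_bucketed_line_agree_le)
        (use ij I(1) p(1,2) \<open>0 < s\<close> \<open>q * s \<le> p\<close> bc in auto)
    then show "card {x\<in>{..<n}. bucketed_line p s i x = bucketed_line p s j x} \<le> 63"
      unfolding bc using \<open>s \<le> 32\<close> by linarith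
  qed
qed

section \<open>Corradi's inequality and greedy covering\<close>

lemma sum_card_containing:
  fixes e :: "'i \<Rightarrow> 'a set"
  assumes "finite B" "finite F"
  shows "(\<Sum>v\<in>F. card {i\<in>B. v \<in> e i}) = (\<Sum>i\<in>B. card (e i \<inter> F))"
  using assms by (subst sum_multicount_gen) (auto intro!: sum.cong arg_cong[where f = card])

lemma sum_card_containing_squared:
  fixes e :: "'i \<Rightarrow> 'a set"
  assumes "finite B" "finite F"
  shows "(\<Sum>v\<in>F. card {i\<in>B. v \<in> e i} ^ 2) = (\<Sum>i\<in>B. \<Sum>j\<in>B. card (e i \<inter> e j \<inter> F))"
proof -
  have "card {i\<in>B. v \<in> e i} ^ 2 = card {ij\<in>B \<times> B. v \<in> e (fst ij) \<inter> e (snd ij)}" for v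
  proof -
    have "{ij\<in>B \<times> B. v \<in> e (fst ij) \<inter> e (snd ij)} = {i\<in>B. v \<in> e i} \<times> {i\<in>B. v \<in> e i}" by auto
    then show ?thesis by (simp add: card_cartesian_product power2_eq_square)
  qed
  then have "(\<Sum>v\<in>F. card {i\<in>B. v \<in> e i} ^ 2)
      = (\<Sum>v\<in>F. card {ij\<in>B \<times> B. v \<in> e (fst ij) \<inter> e (snd ij)})"
    by (simp only:)
  also have "\<dots> = (\<Sum>ij\<in>B \<times> B. card {v\<in>F. v \<in> e (fst ij) \<inter> e (snd ij)})"
    using assms by (intro sum_multicount_gen) auto
  also have "\<dots> = (\<Sum>ij\<in>B \<times> B. card (e (fst ij) \<inter> e (snd ij) \<inter> F))"
    by (intro sum.cong arg_cong[where f = card]) auto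
  also have "\<dots> = (\<Sum>i\<in>B. \<Sum>j\<in>B. card (e i \<inter> e j \<inter> F))"
    by (simp add: sum.cartesian_product case_prod_beta)
  finally show ?thesis .
qed

lemma corradi_inequality:
  fixes e :: "'i \<Rightarrow> 'a set" and a :: real
  assumes "finite B" "finite F"
    and size: "\<And>i. i \<in> B \<Longrightarrow> card (e i \<inter> F) \<le> n"
    and overlap: "\<And>i j. i \<in> B \<Longrightarrow> j \<in> B \<Longrightarrow> i \<noteq> j \<Longrightarrow> card (e i \<inter> e j \<inter> F) \<le> lam"
    and dense: "\<And>i. i \<in> B \<Longrightarrow> a \<le> card (e i \<inter> F)" and "0 \<le> a"
  shows "real (card B) * a\<^sup>2 \<le> real (card F) * (real n + real (card B) * real lam)"
proof (cases "B = {}")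
  case False
  define d where "d v = card {i\<in>B. v \<in> e i}" for v
  have "(\<Sum>v\<in>F. d v ^ 2) = (\<Sum>i\<in>B. \<Sum>j\<in>B. card (e i \<inter> e j \<inter> F))"
    unfolding d_def using assms(1,2) by (rule sum_card_containing_squared)
  also have "\<dots> \<le> (\<Sum>i\<in>B. n + card B * lam)"
  proof (rule sum_mono)
    fix i assume "i \<in> B"
    have "(\<Sum>j\<in>B. card (e i \<inter> e j \<inter> F)) = card (e i \<inter> F) + (\<Sum>j\<in>B - {i}. card (e i \<inter> e j \<inter> F))"
      using \<open>finite B\<close> \<open>i \<in> B\<close> by (simp add: sum.remove)
    also have "\<dots> \<le> n + (\<Sum>j\<in>B - {i}. lam)"
      using size overlap \<open>i \<in> B\<close> by (intro add_mono sum_mono) auto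
    also have "\<dots> \<le> n + card B * lam" using \<open>finite B\<close> by (simp add: card_Diff_subset_Int)
    finally show "(\<Sum>j\<in>B. card (e i \<inter> e j \<inter> F)) \<le> n + card B * lam" .
  qed
  finally have sum_d2: "(\<Sum>v\<in>F. real (d v) ^ 2) \<le> real (card B) * (real n + real (card B) * real lam)"
    by (simp flip: of_nat_power of_nat_sum of_nat_mult of_nat_add)
  have "(real (card B) * a)\<^sup>2 \<le> (\<Sum>i\<in>B. real (card (e i \<inter> F)))\<^sup>2"
    using dense \<open>0 \<le> a\<close> sum_mono[of B "\<lambda>_. a"] by (intro power_mono) (auto simp: sum_nonneg)
  also have "\<dots> = (\<Sum>v\<in>F. real (d v))\<^sup>2"
    unfolding d_def by (simp flip: of_nat_sum add: sum_card_containing[OF assms(1,2)])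
  also have "\<dots> \<le> (\<Sum>v\<in>F. real (d v) ^ 2) * card F" by (rule sum_squared_le_sum_of_squares)
  also have "\<dots> \<le> real (card B) * (real n + real (card B) * real lam) * real (card F)"
    using sum_d2 by (intro mult_right_mono) auto
  finally have "real (card B) * (real (card B) * a\<^sup>2)
      \<le> real (card B) * (real (card F) * (real n + real (card B) * real lam))"
    by (simp add: power2_eq_square algebra_simps)
  moreover have "0 < real (card B)" using False \<open>finite B\<close> by (simp add: card_gt_0_iff)
  ultimately show ?thesis by (simp only: mult_le_cancel_left_pos)
qed simp

lemma greedy_hitting_step:
  fixes hits :: "'x \<Rightarrow> 'i \<Rightarrow> bool"
  assumes "finite S" "S \<noteq> {}" "finite R"
    and often: "\<And>i. i \<in> R \<Longrightarrow> card S \<le> k * card {x\<in>S. hits x i}"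
  shows "\<exists>x\<in>S. card R \<le> k * card {i\<in>R. hits x i}"
proof (rule ccontr)
  assume "\<not> ?thesis"
  then have rare: "k * card {i\<in>R. hits x i} < card R" if "x \<in> S" for x
    using that by (simp add: not_le)
  have "card R * card S = (\<Sum>i\<in>R. card S)" by simp
  also have "\<dots> \<le> (\<Sum>i\<in>R. k * card {x\<in>S. hits x i})" using often by (rule sum_mono)
  also have "\<dots> = k * (\<Sum>i\<in>R. card {x\<in>S. hits x i})" by (simp add: sum_distrib_left)
  also have "(\<Sum>i\<in>R. card {x\<in>S. hits x i}) = (\<Sum>x\<in>S. card {i\<in>R. hits x i})"
    using assms(1,3) by (intro sum_multicount_gen) auto
  also have "k * \<dots> = (\<Sum>x\<in>S. k * card {i\<in>R. hits x i})" by (simp add: sum_distrib_left)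
  also have "\<dots> < (\<Sum>x\<in>S. card R)" by (rule sum_strict_mono[OF assms(1,2) rare])
  also have "\<dots> = card R * card S" by simp
  finally show False by simp
qed

lemma greedy_hitting:
  fixes hits :: "'x \<Rightarrow> 'i \<Rightarrow> bool"
  assumes "finite S" "S \<noteq> {}" "finite R" "0 < k"
    and "\<And>i. i \<in> R \<Longrightarrow> card S \<le> k * card {x\<in>S. hits x i}"
  shows "\<exists>X\<subseteq>S. card X \<le> t \<and> card {i\<in>R. \<forall>x\<in>X. \<not> hits x i} \<le> (1 - 1 / k) ^ t * card R"
  using assms(3,5)
proof (induction t arbitrary: R)
  case 0
  show ?case by (intro exI[of _ "{}"]) (simp add: card_mono)
next
  case (Suc t)
  have "\<exists>x\<in>S. card R \<le> k * card {i\<in>R. hits x i}"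
    by (rule greedy_hitting_step) (use assms(1,2) Suc.prems in auto)
  then obtain x where x: "x \<in> S" "card R \<le> k * card {i\<in>R. hits x i}" ..
  define R' where "R' = {i\<in>R. \<not> hits x i}"
  have "card R' + card {i\<in>R. hits x i} = card R"
    unfolding R'_def using Suc.prems(1) by (subst card_Un_disjoint[symmetric]) (auto intro: arg_cong[where f = card])
  then have "real (card R') = real (card R) - real (card {i\<in>R. hits x i})"
    by (simp flip: of_nat_add)
  moreover have "real (card R) / k \<le> card {i\<in>R. hits x i}"
    using x(2) \<open>0 < k\<close> by (simp add: divide_le_eq mult.commute flip: of_nat_mult)
  moreover have "(1 - 1 / k) * real (card R) = card R - card R / k" by (simp add: algebra_simps)
  ultimately have R': "card R' \<le> (1 - 1 / k) * card R" by linarith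
  obtain X where X: "X \<subseteq> S" "card X \<le> t" "card {i\<in>R'. \<forall>x\<in>X. \<not> hits x i} \<le> (1 - 1 / k) ^ t * card R'"
    using Suc.IH[of R'] Suc.prems unfolding R'_def by auto
  have card_insert: "card (insert x X) \<le> Suc t"
    using finite_subset[OF X(1) assms(1)] X(2) by (simp add: card_insert_if)
  have "0 \<le> 1 - 1 / real k" using \<open>0 < k\<close> by simp
  then have "(1 - 1 / k) ^ t * card R' \<le> (1 - 1 / k) ^ t * ((1 - 1 / k) * card R)"
    by (intro mult_left_mono[OF R'] zero_le_power)
  moreover have "{i\<in>R. \<forall>y\<in>insert x X. \<not> hits y i} = {i\<in>R'. \<forall>y\<in>X. \<not> hits y i}"
    unfolding R'_def by auto
  ultimately have "card {i\<in>R. \<forall>y\<in>insert x X. \<not> hits y i} \<le> (1 - 1 / k) ^ t * ((1 - 1 / k) * card R)"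
    using X(3) by simp
  also have "\<dots> = (1 - 1 / k) ^ Suc t * card R" by (simp add: mult_ac)
  finally have "card {i\<in>R. \<forall>y\<in>insert x X. \<not> hits y i} \<le> (1 - 1 / k) ^ Suc t * card R" .
  then show ?case using X(1) x(1) card_insert by (intro exI[of _ "insert x X"]) auto
qed

lemma nine_tenths_power_mult_square_le_1:
  fixes x :: real
  assumes "1 \<le> x" and "20 * ln x \<le> t"
  shows "(9 / 10) ^ t * x\<^sup>2 \<le> 1"
proof -
  have "ln ((9 / 10) ^ t * x\<^sup>2) = t * ln (9 / 10) + 2 * ln x"
    using assms(1) by (simp add: ln_mult ln_realpow)
  also have "\<dots> \<le> t * (- 1 / 10) + 2 * ln x"
    using ln_le_minus_one[of "9 / 10 :: real"] by (intro add_right_mono mult_left_mono) auto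
  also have "\<dots> \<le> 0" using assms(2) by simp
  finally show ?thesis using assms(1) by simp
qed

section \<open>The grid hypergraph\<close>

text \<open>The number \<open>x * n + y\<close> encodes the cell \<open>(x, y)\<close> of the \<open>n \<times> n\<close> grid.\<close>

definition grid_graph :: "nat \<Rightarrow> (nat \<Rightarrow> nat) \<Rightarrow> nat set" where
  "grid_graph n g = (\<lambda>x. x * n + g x) ` {..<n}"

definition grid_column :: "nat \<Rightarrow> nat \<Rightarrow> nat set" where
  "grid_column n x = (\<lambda>y. x * n + y) ` {..<n}"

lemma grid_point_eq_iff:
  fixes n x y x' y' :: nat
  assumes "y < n" "y' < n"
  shows "x * n + y = x' * n + y' \<longleftrightarrow> x = x' \<and> y = y'"
proof
  assume eq: "x * n + y = x' * n + y'"
  have "x = (x * n + y) div n" "y = (x * n + y) mod n"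
    "x' = (x' * n + y') div n" "y' = (x' * n + y') mod n" using assms by auto
  then show "x = x' \<and> y = y'" using eq by metis
qed simp

lemma grid_point_less:
  fixes n x y :: nat
  assumes "x < n" "y < n"
  shows "x * n + y < n\<^sup>2"
proof -
  have "x * n + y < (x + 1) * n" using assms(2) by simp
  also have "\<dots> \<le> n * n" using assms(1) by (intro mult_right_mono) auto
  finally show ?thesis by (simp add: power2_eq_square)
qed

context
  fixes n :: nat and g :: "nat \<Rightarrow> nat"
  assumes g_range: "\<And>x. x < n \<Longrightarrow> g x < n"
begin

lemma inj_on_grid_graph: "inj_on (\<lambda>x. x * n + g x) {..<n}"
  using g_range by (auto intro: inj_onI simp: grid_point_eq_iff)

lemma card_grid_graph: "card (grid_graph n g) = n"
  unfolding grid_graph_def using card_image[OF inj_on_grid_graph] by simp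

lemma grid_graph_subset: "grid_graph n g \<subseteq> {..<n\<^sup>2}"
  unfolding grid_graph_def using g_range grid_point_less by auto

lemma card_grid_graph_Diff: "card (grid_graph n g - F) = card {x\<in>{..<n}. x * n + g x \<notin> F}"
proof -
  have "grid_graph n g - F = (\<lambda>x. x * n + g x) ` {x\<in>{..<n}. x * n + g x \<notin> F}"
    unfolding grid_graph_def by auto
  then show ?thesis using card_image inj_on_subset[OF inj_on_grid_graph] by (metis (no_types, lifting) mem_Collect_eq subsetI)
qed

lemma card_grid_graph_Int_le:
  fixes h :: "nat \<Rightarrow> nat"
  assumes "\<And>x. x < n \<Longrightarrow> h x < n"
  shows "card (grid_graph n g \<inter> grid_graph n h) \<le> card {x\<in>{..<n}. g x = h x}"
proof -
  have "grid_graph n g \<inter> grid_graph n h \<subseteq> (\<lambda>x. x * n + g x) ` {x\<in>{..<n}. g x = h x}"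
    unfolding grid_graph_def using g_range assms by (auto simp: grid_point_eq_iff)
  then have "card (grid_graph n g \<inter> grid_graph n h) \<le> card ((\<lambda>x. x * n + g x) ` {x\<in>{..<n}. g x = h x})"
    by (rule card_mono[rotated]) simp
  also have "\<dots> \<le> card {x\<in>{..<n}. g x = h x}" by (rule card_image_le) simp
  finally show ?thesis .
qed

end

lemma grid_graph_Int_grid_column:
  assumes "x < n" "g x < n"
  shows "x * n + g x \<in> grid_graph n g \<inter> grid_column n x"
  using assms unfolding grid_graph_def grid_column_def by auto

lemma card_grid_columns_le:
  assumes "finite X"
  shows "card (\<Union>x\<in>X. grid_column n x) \<le> card X * n"
proof -
  have "card (\<Union>x\<in>X. grid_column n x) \<le> (\<Sum>x\<in>X. card (grid_column n x))"
    using assms by (rule card_UN_le)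
  also have "\<dots> \<le> (\<Sum>x\<in>X. n)"
    unfolding grid_column_def by (intro sum_mono) (metis card_image_le card_lessThan finite_lessThan)
  finally show ?thesis by simp
qed

lemma grid_columns_subset: "X \<subseteq> {..<n} \<Longrightarrow> (\<Union>x\<in>X. grid_column n x) \<subseteq> {..<n\<^sup>2}"
  unfolding grid_column_def using grid_point_less by auto

definition everywhere_almost_hittable :: "nat \<Rightarrow> 'a set \<Rightarrow> 'a set set \<Rightarrow> bool" where
  "everywhere_almost_hittable n V E \<longleftrightarrow>
     (\<forall>F \<subseteq> V. real (card F) \<le> real (n\<^sup>2) / 100 \<longrightarrow>
        (\<exists>H \<subseteq> V. real (card H) \<le> 100 * real n * ln (real n) \<and> H \<inter> F = {} \<and>
           card {e \<in> E. e \<inter> H = {}} \<le> n))"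

lemma card_heavy_edges_le:
  fixes e :: "'i \<Rightarrow> 'a set"
  assumes "0 < n" "finite I" "finite F" "100 * card F \<le> n\<^sup>2"
    and size: "\<And>i. i \<in> I \<Longrightarrow> card (e i) = n"
    and overlap: "\<And>i j. i \<in> I \<Longrightarrow> j \<in> I \<Longrightarrow> i \<noteq> j \<Longrightarrow> card (e i \<inter> e j) \<le> 63"
  shows "18 * card {i\<in>I. 10 * card (e i - F) < n} \<le> n"
proof -
  define B where "B = {i\<in>I. 10 * card (e i - F) < n}"
  have fin: "finite (e i)" if "i \<in> I" for i using size[OF that] \<open>0 < n\<close> card.infinite by force
  have in_F: "card (e i \<inter> F) + card (e i - F) = n" if "i \<in> I" for i
    using fin[OF that] size[OF that] card_Int_Diff[of "e i" F] by simp
  have "real (card B) * (9 / 10 * n)\<^sup>2 \<le> real (card F) * (real n + real (card B) * real 63)"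
  proof (rule corradi_inequality)
    show "finite B" using \<open>finite I\<close> unfolding B_def by simp
    show "card (e i \<inter> F) \<le> n" if "i \<in> B" for i using in_F that unfolding B_def by fastforce
    show "9 / 10 * real n \<le> card (e i \<inter> F)" if "i \<in> B" for i
      using in_F[of i] that unfolding B_def by auto
    show "card (e i \<inter> e j \<inter> F) \<le> 63" if "i \<in> B" "j \<in> B" "i \<noteq> j" for i j
      using overlap[of i j] that fin card_mono[of "e i \<inter> e j" "e i \<inter> e j \<inter> F"] unfolding B_def by force
  qed (use \<open>finite F\<close> in auto)
  also have "\<dots> \<le> real n ^ 2 / 100 * (real n + real (card B) * real 63)"
    using \<open>100 * card F \<le> n\<^sup>2\<close> by (intro mult_right_mono) (simp_all flip: of_nat_mult of_nat_power)
  finally have "real n ^ 2 * (81 * card B) \<le> real n ^ 2 * (n + 63 * card B)"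
    by (simp add: power2_eq_square field_simps)
  then have "81 * real (card B) \<le> n + 63 * card B" using \<open>0 < n\<close> by simp
  then show ?thesis unfolding B_def by linarith
qed

lemma grid_family_hitting_columns:
  fixes I :: "'i set" and g :: "'i \<Rightarrow> nat \<Rightarrow> nat"
  assumes "100 \<le> n" "finite I" "card I = n\<^sup>2"
    and range: "\<And>i x. i \<in> I \<Longrightarrow> x < n \<Longrightarrow> g i x < n"
    and agree: "\<And>i j. i \<in> I \<Longrightarrow> j \<in> I \<Longrightarrow> i \<noteq> j \<Longrightarrow> card {x\<in>{..<n}. g i x = g j x} \<le> 63"
    and "finite F" "100 * card F \<le> n\<^sup>2"
  shows "\<exists>X\<subseteq>{..<n}. real (card X) \<le> 20 * ln (real n) + 1 \<and> card {i\<in>I. \<forall>x\<in>X. x * n + g i x \<in> F} \<le> n"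
proof -
  define B where "B = {i\<in>I. 10 * card (grid_graph n (g i) - F) < n}"
  define hits where "hits x i \<longleftrightarrow> x * n + g i x \<notin> F" for x i
  define t where "t = nat \<lceil>20 * ln (real n)\<rceil>"
  have "1 \<le> ln (real n)" using \<open>100 \<le> n\<close> exp_le ln_ge_iff[of "real n" 1] by simp
  have "18 * card B \<le> n"
    unfolding B_def using assms(1,2) \<open>finite F\<close> \<open>100 * card F \<le> n\<^sup>2\<close>
    by (intro card_heavy_edges_le)
      (auto simp: card_grid_graph range intro: le_trans[OF card_grid_graph_Int_le agree])
  have "0 \<in> {..<n}" using \<open>100 \<le> n\<close> by simp
  have "\<exists>X\<subseteq>{..<n}. card X \<le> t \<and>
      card {i\<in>I - B. \<forall>x\<in>X. \<not> hits x i} \<le> (1 - 1 / real 10) ^ t * card (I - B)"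
  proof (rule greedy_hitting)
    show "card {..<n} \<le> 10 * card {x\<in>{..<n}. hits x i}" if "i \<in> I - B" for i
      using that card_grid_graph_Diff[of n "g i" F] range unfolding B_def hits_def by auto
  qed (use \<open>finite I\<close> \<open>0 \<in> {..<n}\<close> in auto)
  then obtain X where X: "X \<subseteq> {..<n}" "card X \<le> t"
    and rem: "card {i\<in>I - B. \<forall>x\<in>X. \<not> hits x i} \<le> (9 / 10) ^ t * card (I - B)"
    by auto
  have "card (I - B) \<le> n\<^sup>2" using \<open>card I = n\<^sup>2\<close> \<open>finite I\<close> by (metis card_mono Diff_subset)
  then have "(9 / 10) ^ t * card (I - B) \<le> (9 / 10) ^ t * real n ^ 2"
    by (intro mult_left_mono) (simp_all flip: of_nat_power)
  also have "\<dots> \<le> 1"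
    by (rule nine_tenths_power_mult_square_le_1) (use \<open>100 \<le> n\<close> in \<open>simp_all add: t_def\<close>)
  finally have "card {i\<in>I - B. \<forall>x\<in>X. \<not> hits x i} \<le> 1" using rem by linarith
  have "{i\<in>I. \<forall>x\<in>X. x * n + g i x \<in> F} \<subseteq> B \<union> {i\<in>I - B. \<forall>x\<in>X. \<not> hits x i}"
    unfolding hits_def by blast
  then have "card {i\<in>I. \<forall>x\<in>X. x * n + g i x \<in> F} \<le> card (B \<union> {i\<in>I - B. \<forall>x\<in>X. \<not> hits x i})"
    using \<open>finite I\<close> unfolding B_def by (intro card_mono) auto
  also have "\<dots> \<le> card B + card {i\<in>I - B. \<forall>x\<in>X. \<not> hits x i}" by (rule card_Un_le)
  also have "\<dots> \<le> n"
    using \<open>18 * card B \<le> n\<close> \<open>card {i\<in>I - B. \<forall>x\<in>X. \<not> hits x i} \<le> 1\<close> \<open>100 \<le> n\<close> by linarith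
  finally have "card {i\<in>I. \<forall>x\<in>X. x * n + g i x \<in> F} \<le> n" .
  moreover have "real (card X) \<le> 20 * ln (real n) + 1"
    using X(2) \<open>1 \<le> ln (real n)\<close> unfolding t_def by linarith
  ultimately show ?thesis using X(1) by blast
qed

lemma grid_family_hitting_set:
  fixes I :: "'i set" and g :: "'i \<Rightarrow> nat \<Rightarrow> nat"
  assumes "100 \<le> n" "finite I" "card I = n\<^sup>2"
    and range: "\<And>i x. i \<in> I \<Longrightarrow> x < n \<Longrightarrow> g i x < n"
    and agree: "\<And>i j. i \<in> I \<Longrightarrow> j \<in> I \<Longrightarrow> i \<noteq> j \<Longrightarrow> card {x\<in>{..<n}. g i x = g j x} \<le> 63"
    and "F \<subseteq> {..<n\<^sup>2}" "100 * card F \<le> n\<^sup>2"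
  shows "\<exists>H \<subseteq> {..<n\<^sup>2}. real (card H) \<le> 100 * real n * ln (real n) \<and> H \<inter> F = {} \<and>
           card {e \<in> (\<lambda>i. grid_graph n (g i)) ` I. e \<inter> H = {}} \<le> n"
proof -
  have "finite F" using \<open>F \<subseteq> {..<n\<^sup>2}\<close> finite_subset by blast
  from assms(1-5) this \<open>100 * card F \<le> n\<^sup>2\<close>
  have "\<exists>X\<subseteq>{..<n}. real (card X) \<le> 20 * ln (real n) + 1 \<and> card {i\<in>I. \<forall>x\<in>X. x * n + g i x \<in> F} \<le> n"
    by (rule grid_family_hitting_columns)
  then obtain X where X: "X \<subseteq> {..<n}" "real (card X) \<le> 20 * ln (real n) + 1"
    and few: "card {i\<in>I. \<forall>x\<in>X. x * n + g i x \<in> F} \<le> n"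
    by blast
  define H where "H = (\<Union>x\<in>X. grid_column n x) - F"
  have "1 \<le> ln (real n)" using \<open>100 \<le> n\<close> exp_le ln_ge_iff[of "real n" 1] by simp
  have "finite (\<Union>x\<in>X. grid_column n x)"
    using grid_columns_subset[OF X(1)] finite_subset by blast
  then have "card H \<le> card (\<Union>x\<in>X. grid_column n x)" unfolding H_def by (intro card_mono) auto
  also have "\<dots> \<le> card X * n" using X(1) finite_subset by (intro card_grid_columns_le) blast
  finally have "real (card H) \<le> real (card X) * real n" by (simp flip: of_nat_mult)
  also have "\<dots> \<le> (20 * ln (real n) + 1) * real n" using X(2) by (rule mult_right_mono) simp
  also have "\<dots> \<le> 100 * real n * ln (real n)"
    using \<open>1 \<le> ln (real n)\<close> mult_left_mono[of 1 "80 * ln (real n)" "real n"] by (simp add: algebra_simps)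
  finally have card_H: "real (card H) \<le> 100 * real n * ln (real n)" .
  have "{e \<in> (\<lambda>i. grid_graph n (g i)) ` I. e \<inter> H = {}}
      \<subseteq> (\<lambda>i. grid_graph n (g i)) ` {i\<in>I. \<forall>x\<in>X. x * n + g i x \<in> F}"
  proof
    fix e assume "e \<in> {e \<in> (\<lambda>i. grid_graph n (g i)) ` I. e \<inter> H = {}}"
    then obtain i where i: "i \<in> I" "e = grid_graph n (g i)" "grid_graph n (g i) \<inter> H = {}" by blast
    have "x * n + g i x \<in> F" if "x \<in> X" for x
    proof -
      have "x * n + g i x \<in> grid_graph n (g i) \<inter> grid_column n x"
        using that X(1) range[OF i(1)] by (intro grid_graph_Int_grid_column) auto
      then show ?thesis using i(3) that unfolding H_def by blast
    qed
    then show "e \<in> (\<lambda>i. grid_graph n (g i)) ` {i\<in>I. \<forall>x\<in>X. x * n + g i x \<in> F}"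
      using i(1,2) by blast
  qed
  then have "card {e \<in> (\<lambda>i. grid_graph n (g i)) ` I. e \<inter> H = {}}
      \<le> card ((\<lambda>i. grid_graph n (g i)) ` {i\<in>I. \<forall>x\<in>X. x * n + g i x \<in> F})"
    by (rule card_mono[rotated]) (use \<open>finite I\<close> in simp)
  also have "\<dots> \<le> card {i\<in>I. \<forall>x\<in>X. x * n + g i x \<in> F}"
    by (rule card_image_le) (use \<open>finite I\<close> in simp)
  finally have "card {e \<in> (\<lambda>i. grid_graph n (g i)) ` I. e \<inter> H = {}} \<le> n"
    using few by linarith
  moreover have "H \<subseteq> {..<n\<^sup>2}" "H \<inter> F = {}"
    unfolding H_def using grid_columns_subset[OF X(1)] by auto
  ultimately show ?thesis using card_H by blast
qed

lemma grid_family_uniform: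
  fixes g :: "'i \<Rightarrow> nat \<Rightarrow> nat"
  assumes "64 \<le> n"
    and range: "\<And>i x. i \<in> I \<Longrightarrow> x < n \<Longrightarrow> g i x < n"
    and agree: "\<And>i j. i \<in> I \<Longrightarrow> j \<in> I \<Longrightarrow> i \<noteq> j \<Longrightarrow> card {x\<in>{..<n}. g i x = g j x} \<le> 63"
  shows "uniform_hypergraph n {..<n\<^sup>2} ((\<lambda>i. grid_graph n (g i)) ` I)"
    and "card ((\<lambda>i. grid_graph n (g i)) ` I) = card I"
proof -
  show "uniform_hypergraph n {..<n\<^sup>2} ((\<lambda>i. grid_graph n (g i)) ` I)"
    unfolding uniform_hypergraph_def using range by (auto simp: card_grid_graph grid_graph_subset)
  have "inj_on (\<lambda>i. grid_graph n (g i)) I"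
  proof (rule inj_onI, rule ccontr)
    fix i j assume "i \<in> I" "j \<in> I" "grid_graph n (g i) = grid_graph n (g j)" "i \<noteq> j"
    then have "card (grid_graph n (g i)) \<le> 63"
      using card_grid_graph_Int_le[of n "g i" "g j"] agree[of i j] range by fastforce
    then show False using \<open>i \<in> I\<close> \<open>64 \<le> n\<close> range by (simp add: card_grid_graph)
  qed
  then show "card ((\<lambda>i. grid_graph n (g i)) ` I) = card I" by (rule card_image)
qed

lemma grid_family_everywhere_almost_hittable:
  fixes g :: "'i \<Rightarrow> nat \<Rightarrow> nat"
  assumes "100 \<le> n" "finite I" "card I = n\<^sup>2"
    and "\<And>i x. i \<in> I \<Longrightarrow> x < n \<Longrightarrow> g i x < n"
    and "\<And>i j. i \<in> I \<Longrightarrow> j \<in> I \<Longrightarrow> i \<noteq> j \<Longrightarrow> card {x\<in>{..<n}. g i x = g j x} \<le> 63"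
  shows "everywhere_almost_hittable n {..<n\<^sup>2} ((\<lambda>i. grid_graph n (g i)) ` I)"
  unfolding everywhere_almost_hittable_def
proof (intro allI impI)
  fix F assume "F \<subseteq> {..<n\<^sup>2}" "real (card F) \<le> real (n\<^sup>2) / 100"
  then have "100 * card F \<le> n\<^sup>2" by linarith
  with assms \<open>F \<subseteq> {..<n\<^sup>2}\<close> show "\<exists>H \<subseteq> {..<n\<^sup>2}. real (card H) \<le> 100 * real n * ln (real n) \<and> H \<inter> F = {} \<and>
      card {e \<in> (\<lambda>i. grid_graph n (g i)) ` I. e \<inter> H = {}} \<le> n"
    by (rule grid_family_hitting_set)
qed

lemma real_le_100_mult_ln:
  fixes n :: nat
  assumes "2 \<le> n" "n < 100"
  shows "real n \<le> 100 * ln (real n)"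
proof (cases "3 \<le> n")
  case True
  then have "1 \<le> ln (real n)" using exp_le ln_ge_iff[of "real n" 1] by simp
  then show ?thesis using \<open>n < 100\<close> by simp
next
  case False
  then have "n = 2" using \<open>2 \<le> n\<close> by simp
  then show ?thesis using ln2_ge_two_thirds by simp
qed

lemma everywhere_almost_hittable_if_small:
  assumes "1 \<le> n" "n < 100" and E: "uniform_hypergraph n V E" and "card V = n\<^sup>2"
  shows "everywhere_almost_hittable n V E"
  unfolding everywhere_almost_hittable_def
proof (intro allI impI)
  fix F assume "F \<subseteq> V" "real (card F) \<le> real (n\<^sup>2) / 100"
  have "finite V" using E unfolding uniform_hypergraph_def by simp
  show "\<exists>H \<subseteq> V. real (card H) \<le> 100 * real n * ln (real n) \<and> H \<inter> F = {} \<and> card {e \<in> E. e \<inter> H = {}} \<le> n"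
  proof (cases "n = 1")
    case True
    have "E \<subseteq> {S. S \<subseteq> V \<and> card S = n}" using E unfolding uniform_hypergraph_def by auto
    then have "card E \<le> card V choose n"
      using card_mono[OF _ \<open>E \<subseteq> _\<close>] n_subsets[OF \<open>finite V\<close>] \<open>finite V\<close> by simp
    then show ?thesis using True \<open>card V = n\<^sup>2\<close> by (intro exI[of _ "{}"]) simp
  next
    case False
    have "n * n < 100 * n" using \<open>n < 100\<close> \<open>1 \<le> n\<close> by simp
    moreover have "100 * card F \<le> n\<^sup>2" using \<open>real (card F) \<le> real (n\<^sup>2) / 100\<close> by linarith
    ultimately have "card F < n" unfolding power2_eq_square by linarith
    have missed: "{e \<in> E. e \<inter> (V - F) = {}} = {}"
    proof (rule equals0I)
      fix e assume "e \<in> {e \<in> E. e \<inter> (V - F) = {}}"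
      then have "e \<subseteq> F" "card e = n" using E unfolding uniform_hypergraph_def by auto
      moreover have "card e \<le> card F"
        by (rule card_mono[OF finite_subset[OF \<open>F \<subseteq> V\<close> \<open>finite V\<close>] \<open>e \<subseteq> F\<close>])
      ultimately show False using \<open>card F < n\<close> by linarith
    qed
    have "real n \<le> 100 * ln (real n)"
      using \<open>1 \<le> n\<close> \<open>n \<noteq> 1\<close> \<open>n < 100\<close> by (intro real_le_100_mult_ln) auto
    have "card (V - F) \<le> n * n"
      using card_mono[OF \<open>finite V\<close> Diff_subset[of V F]] \<open>card V = n\<^sup>2\<close> by (simp add: power2_eq_square)
    then have "real (card (V - F)) \<le> real n * real n" by (simp flip: of_nat_mult)
    also have "\<dots> \<le> real n * (100 * ln (real n))"
      using \<open>real n \<le> 100 * ln (real n)\<close> by (rule mult_left_mono) simp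
    finally have "real (card (V - F)) \<le> 100 * real n * ln (real n)" by (simp only: mult.assoc mult.left_commute)
    moreover have "card {e \<in> E. e \<inter> (V - F) = {}} \<le> n" by (simp only: missed card.empty)
    ultimately show ?thesis by (intro exI[of _ "V - F"]) auto
  qed
qed

lemma exists_uniform_hypergraph:
  assumes "1 \<le> n"
  shows "\<exists>E. uniform_hypergraph n {..<n\<^sup>2} E \<and> finite E \<and> card E = n\<^sup>2"
proof -
  have "n\<^sup>2 \<le> n\<^sup>2 choose n"
  proof (cases "n = 1")
    case False
    then have "n < n\<^sup>2" using assms by (simp add: power2_eq_square)
    then show ?thesis using assms by (intro upper_le_binomial) auto
  qed simp
  then have "n\<^sup>2 \<le> card {S. S \<subseteq> {..<n\<^sup>2} \<and> card S = n}" by (simp add: n_subsets)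
  then obtain E where "E \<subseteq> {S. S \<subseteq> {..<n\<^sup>2} \<and> card S = n}" "card E = n\<^sup>2" "finite E"
    by (rule obtain_subset_with_card_n)
  then show ?thesis unfolding uniform_hypergraph_def by auto
qed

theorem lemma3p1:
  fixes n :: nat
  assumes "n \<ge> 1"
  shows "\<exists>(V :: nat set) (E :: nat set set).
           uniform_hypergraph n V E \<and> card V = n^2 \<and> finite E \<and> card E = n^2 \<and>
           (\<forall>F \<subseteq> V. real (card F) \<le> real (n^2) / 100 \<longrightarrow>
              (\<exists>H \<subseteq> V. real (card H) \<le> 100 * real n * ln (real n) \<and> H \<inter> F = {} \<and>
                 card {e \<in> E. e \<inter> H = {}} \<le> n))"
proof (cases "100 \<le> n")
  case True
  obtain I :: "(nat \<times> nat) set" and g :: "nat \<times> nat \<Rightarrow> nat \<Rightarrow> nat"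
    where code: "finite I" "card I = n\<^sup>2"
    "\<And>i x. i \<in> I \<Longrightarrow> x < n \<Longrightarrow> g i x < n"
    "\<And>i j. i \<in> I \<Longrightarrow> j \<in> I \<Longrightarrow> i \<noteq> j \<Longrightarrow> card {x\<in>{..<n}. g i x = g j x} \<le> 63"
    by (rule obtain_functions_pairwise_few_agreements[OF True]) (rule that)
  let ?E = "(\<lambda>i. grid_graph n (g i)) ` I"
  have "64 \<le> n" using True by simp
  from this code(3,4) have "uniform_hypergraph n {..<n\<^sup>2} ?E"
    by (rule grid_family_uniform(1))
  moreover from \<open>64 \<le> n\<close> code(3,4) have "card ?E = card I"
    by (rule grid_family_uniform(2))
  moreover from True code have "everywhere_almost_hittable n {..<n\<^sup>2} ?E"
    by (rule grid_family_everywhere_almost_hittable)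
  ultimately have "uniform_hypergraph n {..<n\<^sup>2} ?E \<and> card {..<n\<^sup>2} = n\<^sup>2 \<and> finite ?E \<and> card ?E = n\<^sup>2 \<and>
      everywhere_almost_hittable n {..<n\<^sup>2} ?E"
    using code(1,2) by simp
  then show ?thesis unfolding everywhere_almost_hittable_def by (rule exI[of _ "{..<n\<^sup>2}", OF exI[of _ ?E]])
next
  case False
  obtain E where E: "uniform_hypergraph n {..<n\<^sup>2} E" "finite E" "card E = n\<^sup>2"
    using exists_uniform_hypergraph assms by blast
  have "n < 100" using False by simp
  then have "everywhere_almost_hittable n {..<n\<^sup>2} E"
    using everywhere_almost_hittable_if_small[OF assms _ E(1)] by simp
  with E have "uniform_hypergraph n {..<n\<^sup>2} E \<and> card {..<n\<^sup>2} = n\<^sup>2 \<and> finite E \<and> card E = n\<^sup>2 \<and>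
      everywhere_almost_hittable n {..<n\<^sup>2} E" by simp
  then show ?thesis unfolding everywhere_almost_hittable_def by (rule exI[of _ "{..<n\<^sup>2}", OF exI[of _ E]])
qed

end
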